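(* Let $\mathcal{X},\mathcal{Y}$ be finite, $m\ge1$, $Q$ a distribution on $\mathcal{X}$ with $Q(x)>0$ for all $x$, and $\mathbf x\in\mathcal{X}^m,\mathbf y\in\mathcal{Y}^m$. With $\tilde W(y|x)=\hat P_{\mathbf x,\mathbf y}(x,y)/Q(x)$, $$\tilde I(Q,\tilde W)=\frac1m\log_2\frac{\hat p(\mathbf x|\mathbf y)}{Q(\mathbf x)}.$$ Moreover, for every real $T$ and every $\mathbf y\in\mathcal{Y}^m$, if $\mathbf X=(X_1,\dots,X_m)$ is i.i.d. with law $Q$, then $$\Pr\left(\frac{\hat p(\mathbf X|\mathbf y)}{Q(\mathbf X)}\ge2^{mT}\right)\le2^{-(mT-k_0\log_2m-k_1)},\qquad k_0=k_1=(|\mathcal{X}|-1)|\mathcal{Y}|.$$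
   Context: $\hat P_{\mathbf x,\mathbf y}(x,y)=\frac1m\sum_{i=1}^m\mathbf 1(x_i=x,y_i=y)$ is the joint empirical distribution, $\hat P_{\mathbf y}(y)$ the empirical distribution of $\mathbf y$, and $\hat P_{\mathbf x|\mathbf y}(x|y)=\hat P_{\mathbf x,\mathbf y}(x,y)/\hat P_{\mathbf y}(y)$. The conditional empirical probability is $\hat p(\mathbf x|\mathbf y)=\prod_{i=1}^m\hat P_{\mathbf x|\mathbf y}(x_i|y_i)$, and $Q(\mathbf x)=\prod_{i=1}^mQ(x_i)$. The false mutual information of a non-negative function $\tilde W(y|x)$ is $\tilde I(Q,\tilde W)=\sum_{x,y}Q(x)\tilde W(y|x)\log_2\frac{\tilde W(y|x)}{\sum_{x'}Q(x')\tilde W(y|x')}$ with $0\log0=0$. *)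

theory Defs
  imports Complex_Main
begin

definition emp_joint :: "'x list \<Rightarrow> 'y list \<Rightarrow> 'x \<Rightarrow> 'y \<Rightarrow> real" where
  "emp_joint xs ys x y =
     real (card {i. i < length xs \<and> xs ! i = x \<and> ys ! i = y}) / real (length xs)"

definition emp_marg :: "'y list \<Rightarrow> 'y \<Rightarrow> real" where
  "emp_marg ys y = real (card {i. i < length ys \<and> ys ! i = y}) / real (length ys)"

definition emp_cond :: "'x list \<Rightarrow> 'y list \<Rightarrow> 'x \<Rightarrow> 'y \<Rightarrow> real" where
  "emp_cond xs ys x y = emp_joint xs ys x y / emp_marg ys y"

definition phat :: "'x list \<Rightarrow> 'y list \<Rightarrow> real" where
  "phat xs ys = (\<Prod>i<length xs. emp_cond xs ys (xs ! i) (ys ! i))"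

definition Qprod :: "('x \<Rightarrow> real) \<Rightarrow> 'x list \<Rightarrow> real" where
  "Qprod Q xs = (\<Prod>i<length xs. Q (xs ! i))"

text \<open>False mutual information, with 0 log 0 = 0; W y x stands for W(y|x).\<close>
definition false_MI :: "('x::finite \<Rightarrow> real) \<Rightarrow> ('y::finite \<Rightarrow> 'x \<Rightarrow> real) \<Rightarrow> real" where
  "false_MI Q W = (\<Sum>x\<in>UNIV. \<Sum>y\<in>UNIV. Q x * W y x *
      (if Q x * W y x = 0 then 0
       else log 2 (W y x / (\<Sum>x'\<in>UNIV. Q x' * W y x'))))"

definition iid_prob :: "('x \<Rightarrow> real) \<Rightarrow> nat \<Rightarrow> ('x list \<Rightarrow> bool) \<Rightarrow> real" where
  "iid_prob Q m E = (\<Sum>xs\<in>{xs. length xs = m \<and> E xs}. Qprod Q xs)"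

end

theory Submission
  imports Defs "HOL-Library.FuncSet"
begin

(*
  Both claims are proved by counting joint types.  Write N(x,y) for the number of
  positions i with (x_i, y_i) = (x, y), so that the empirical joint distribution is N/m.

  With W~(y|x) = P^(x,y)/Q(x) the output distribution sum_x Q(x) W~(y|x) is the
  empirical marginal P^(y), so every summand of the false mutual information equals
  P^(x,y) log2 (P^(x|y)/Q(x)).  Regrouping the sum over (x,y) as a sum over positions i
  turns it into (1/m) sum_i log2 (P^(x_i|y_i)/Q(x_i)) = (1/m) log2 (p^(x|y)/Q(x)).

  A Markov-type change of measure bounds the Q^m-probability of the event
  p^(X|y)/Q(X) >= 2^(mT) by 2^(-mT) sum_X p^(X|y).  Grouping the sequences X by their
  conditional type P^(.|.)_{X,y}, each group contributes at most
  sum_X prod_i V(X_i|y_i) = 1, since every row V(.|y_i) is a probability vector.  A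
  conditional type is determined by the counts N(x,y) for x different from one fixed
  symbol, so there are at most (m+1)^k of them, k = (|X|-1)|Y|; finally
  (m+1)^k <= (2m)^k = 2^(k log2 m + k).
*)

section \<open>Joint counts\<close>

definition joint_count :: "'x list \<Rightarrow> 'y list \<Rightarrow> 'x \<Rightarrow> 'y \<Rightarrow> nat" where
  "joint_count X ys x y = card {i. i < length X \<and> X ! i = x \<and> ys ! i = y}"

lemma card_filter_as_sum:
  "(of_nat (card {i. i < (m::nat) \<and> P i}) :: 'a::comm_semiring_1) = (\<Sum>i<m. if P i then 1 else 0)"
proof -
  have "{i. i < m \<and> P i} = {i\<in>{..<m}. P i}" by auto
  then have "(of_nat (card {i. i < m \<and> P i}) :: 'a) = (\<Sum>i\<in>{i\<in>{..<m}. P i}. 1)" by simp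
  also have "\<dots> = (\<Sum>i<m. if P i then 1 else 0)" by (rule sum.inter_filter) simp
  finally show ?thesis .
qed

lemma sum_by_joint_type:
  fixes X :: "'x::finite list" and ys :: "'y::finite list"
    and h :: "'x \<Rightarrow> 'y \<Rightarrow> 'a::comm_semiring_1"
  shows "(\<Sum>i<length X. h (X ! i) (ys ! i))
       = (\<Sum>x\<in>UNIV. \<Sum>y\<in>UNIV. of_nat (joint_count X ys x y) * h x y)"
proof -
  have "(\<Sum>x\<in>UNIV. \<Sum>y\<in>UNIV. of_nat (joint_count X ys x y) * h x y)
     = (\<Sum>x\<in>UNIV. \<Sum>y\<in>UNIV. \<Sum>i<length X. if X ! i = x \<and> ys ! i = y then h x y else 0)"
    unfolding joint_count_def card_filter_as_sum sum_distrib_right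
    by (intro sum.cong refl) auto
  also have "\<dots> = (\<Sum>i<length X. \<Sum>x\<in>UNIV. \<Sum>y\<in>UNIV. if X ! i = x \<and> ys ! i = y then h x y else 0)"
    by (simp only: sum.swap[of _ UNIV "{..<length X}"])
  also have "\<dots> = (\<Sum>i<length X. h (X ! i) (ys ! i))"
  proof (intro sum.cong refl)
    fix i
    have "(\<Sum>x\<in>UNIV. \<Sum>y\<in>UNIV. if X ! i = x \<and> ys ! i = y then h x y else 0)
        = (\<Sum>x\<in>UNIV. if X ! i = x then (\<Sum>y\<in>UNIV. if ys ! i = y then h x y else 0) else 0)"
      by (intro sum.cong refl) auto
    then show "(\<Sum>x\<in>UNIV. \<Sum>y\<in>UNIV. if X ! i = x \<and> ys ! i = y then h x y else 0) = h (X ! i) (ys ! i)"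
      by (simp add: sum.delta)
  qed
  finally show ?thesis by simp
qed

lemma sum_joint_count:
  fixes X :: "'x::finite list" and ys :: "'y::finite list"
  assumes "length X = length ys"
  shows "(\<Sum>x\<in>UNIV. joint_count X ys x y) = card {i. i < length ys \<and> ys ! i = y}"
proof -
  have "card {i. i < length ys \<and> ys ! i = y}
      = (\<Sum>i<length X. (\<lambda>x' y'. if y' = y then 1 else 0) (X ! i) (ys ! i))"
    using card_filter_as_sum[where 'a=nat, of "length ys" "\<lambda>i. ys ! i = y"] assms by simp
  also have "\<dots> = (\<Sum>x\<in>UNIV. \<Sum>y'\<in>UNIV. joint_count X ys x y' * (if y' = y then 1 else 0))"
    using sum_by_joint_type[where 'a=nat] by simp
  also have "\<dots> = (\<Sum>x\<in>UNIV. joint_count X ys x y)"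
    by (simp add: if_distrib[of "(*) _"] cong: if_cong)
  finally show ?thesis by simp
qed

lemma joint_count_le: "joint_count X ys x y \<le> length X"
proof -
  have "joint_count X ys x y \<le> card {..<length X}"
    unfolding joint_count_def by (rule card_mono) auto
  then show ?thesis by simp
qed

lemma emp_joint_count: "emp_joint X ys x y = real (joint_count X ys x y) / real (length X)"
  by (simp add: emp_joint_def joint_count_def)

lemma emp_marg_as_sum:
  fixes X :: "'x::finite list" and ys :: "'y::finite list"
  assumes "length X = length ys"
  shows "emp_marg ys y = (\<Sum>x\<in>UNIV. emp_joint X ys x y)"
proof -
  have "(\<Sum>x\<in>UNIV. emp_joint X ys x y) = real (\<Sum>x\<in>UNIV. joint_count X ys x y) / real (length X)"
    by (simp add: emp_joint_count sum_divide_distrib)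
  also have "(\<Sum>x\<in>UNIV. joint_count X ys x y) = card {i. i < length ys \<and> ys ! i = y}"
    by (rule sum_joint_count[OF assms])
  finally show ?thesis
    using assms by (simp add: emp_marg_def)
qed

lemma emp_cond_nonneg: "emp_cond X ys x y \<ge> 0"
  by (simp add: emp_cond_def emp_joint_def emp_marg_def)

lemma emp_cond_pos:
  assumes "length X = length ys" "i < length X"
  shows "emp_cond X ys (X ! i) (ys ! i) > 0"
proof -
  have "i \<in> {j. j < length X \<and> X ! j = X ! i \<and> ys ! j = ys ! i}"
       "i \<in> {j. j < length ys \<and> ys ! j = ys ! i}"
    using assms by auto
  then have "card {j. j < length X \<and> X ! j = X ! i \<and> ys ! j = ys ! i} > 0"
            "card {j. j < length ys \<and> ys ! j = ys ! i} > 0"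
    by (auto simp: card_gt_0_iff)
  moreover have "ys \<noteq> []" using assms by auto
  ultimately show ?thesis
    using assms by (simp add: emp_cond_def emp_joint_def emp_marg_def)
qed

section \<open>The false mutual information of the empirical channel\<close>

lemma empirical_channel_output:
  fixes Q :: "'x::finite \<Rightarrow> real" and ys :: "'y::finite list"
  assumes Qpos: "\<And>x. Q x > 0" and "length xs = length ys"
  shows "(\<Sum>x\<in>UNIV. Q x * (emp_joint xs ys x y / Q x)) = emp_marg ys y"
  using emp_marg_as_sum[OF assms(2)] Qpos by (simp add: less_imp_neq[symmetric])

lemma log_phat_ratio:
  fixes Q :: "'x \<Rightarrow> real"
  assumes Qpos: "\<And>x. Q x > 0" and "length xs = length ys"
  shows "log 2 (phat xs ys / Qprod Q xs)
       = (\<Sum>i<length xs. log 2 (emp_cond xs ys (xs ! i) (ys ! i) / Q (xs ! i)))"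
proof -
  have cond_ne: "emp_cond xs ys (xs ! i) (ys ! i) \<noteq> 0" if "i < length xs" for i
    using emp_cond_pos[OF assms(2) that] by simp
  have Q_ne: "Q x \<noteq> 0" for x
    using Qpos[of x] by simp
  have "phat xs ys / Qprod Q xs = (\<Prod>i<length xs. emp_cond xs ys (xs ! i) (ys ! i) / Q (xs ! i))"
    by (simp add: prod_dividef phat_def Qprod_def)
  also have "log 2 \<dots> = (\<Sum>i<length xs. ln (emp_cond xs ys (xs ! i) (ys ! i) / Q (xs ! i))) / ln 2"
    unfolding log_def by (subst ln_prod) (simp_all add: cond_ne Q_ne)
  finally show ?thesis by (simp add: log_def sum_divide_distrib)
qed

lemma false_MI_empirical_channel:
  fixes Q :: "'x::finite \<Rightarrow> real" and xs :: "'x list" and ys :: "'y::finite list"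
  assumes Qpos: "\<And>x. Q x > 0" and lx: "length xs = m" and ly: "length ys = m"
  shows "false_MI Q (\<lambda>y x. emp_joint xs ys x y / Q x) = (1 / real m) * log 2 (phat xs ys / Qprod Q xs)"
proof -
  define L where "L x y = log 2 (emp_cond xs ys x y / Q x)" for x y
  have summand: "Q x * (emp_joint xs ys x y / Q x) *
        (if Q x * (emp_joint xs ys x y / Q x) = 0 then 0
         else log 2 (emp_joint xs ys x y / Q x / (\<Sum>x'\<in>UNIV. Q x' * (emp_joint xs ys x' y / Q x'))))
      = emp_joint xs ys x y * L x y" for x y
    using Qpos[of x] empirical_channel_output[OF Qpos, where xs=xs and ys=ys and y=y] lx ly
    by (simp add: L_def emp_cond_def divide_simps mult.commute)
  have "false_MI Q (\<lambda>y x. emp_joint xs ys x y / Q x)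
      = (\<Sum>x\<in>UNIV. \<Sum>y\<in>UNIV. real (joint_count xs ys x y) * L x y) / real m"
    unfolding false_MI_def summand
    by (simp add: emp_joint_count lx sum_divide_distrib)
  also have "\<dots> = (\<Sum>i<m. L (xs ! i) (ys ! i)) / real m"
    using sum_by_joint_type[where X=xs and ys=ys and h=L] lx by simp
  also have "\<dots> = log 2 (phat xs ys / Qprod Q xs) / real m"
    using log_phat_ratio[OF Qpos, of xs ys] lx ly by (simp add: L_def)
  finally show ?thesis by simp
qed

section \<open>Summing the conditional empirical probability over all sequences\<close>

lemma sum_lists_prod:
  fixes f :: "nat \<Rightarrow> 'b::finite \<Rightarrow> 'a::comm_semiring_1"
  shows "(\<Sum>X\<in>{X. length X = m}. \<Prod>i<m. f i (X ! i)) = (\<Prod>i<m. \<Sum>x\<in>UNIV. f i x)"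
proof (induction m arbitrary: f)
  case 0
  then show ?case by simp
next
  case (Suc m)
  have eq: "{X::'b list. length X = Suc m} = (\<lambda>(x, X). x # X) ` (UNIV \<times> {X. length X = m})"
    by (auto simp: length_Suc_conv image_iff)
  have inj: "inj_on (\<lambda>(x, X). x # (X::'b list)) (UNIV \<times> {X. length X = m})"
    by (auto simp: inj_on_def)
  have "(\<Sum>X\<in>{X. length X = Suc m}. \<Prod>i<Suc m. f i (X ! i))
      = (\<Sum>x\<in>UNIV. \<Sum>X\<in>{X. length X = m}. f 0 x * (\<Prod>i<m. f (Suc i) (X ! i)))"
    unfolding eq sum.reindex[OF inj]
    by (simp add: sum.cartesian_product prod.lessThan_Suc_shift case_prod_unfold
        del: prod.lessThan_Suc)
  also have "\<dots> = (\<Sum>x\<in>UNIV. f 0 x) * (\<Prod>i<m. \<Sum>x\<in>UNIV. f (Suc i) x)"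
    by (simp add: sum_distrib_left[symmetric] sum_distrib_right Suc.IH[of "\<lambda>i. f (Suc i)"])
  also have "\<dots> = (\<Prod>i<Suc m. \<Sum>x\<in>UNIV. f i x)"
    by (simp add: prod.lessThan_Suc_shift del: prod.lessThan_Suc)
  finally show ?case .
qed

lemma emp_cond_row_sum:
  fixes X :: "'x::finite list" and ys :: "'y::finite list"
  assumes "length X = length ys" "i < length ys"
  shows "(\<Sum>x\<in>UNIV. emp_cond X ys x (ys ! i)) = 1"
proof -
  have "emp_marg ys (ys ! i) \<noteq> 0"
    using emp_cond_pos[of X ys i] assms by (auto simp: emp_cond_def)
  moreover have "(\<Sum>x\<in>UNIV. emp_cond X ys x (ys ! i)) = (\<Sum>x\<in>UNIV. emp_joint X ys x (ys ! i)) / emp_marg ys (ys ! i)"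
    by (simp add: emp_cond_def sum_divide_distrib)
  ultimately show ?thesis
    using emp_marg_as_sum[OF assms(1)] by simp
qed

text \<open>Each conditional type V contributes at most sum_X prod_i V(X_i|y_i) = 1, so the total
  mass of p^(.|ys) is at most the number of conditional types.\<close>
lemma sum_phat_le_card_types:
  fixes ys :: "'y::finite list"
  shows "(\<Sum>X\<in>{X::'x::finite list. length X = length ys}. phat X ys)
     \<le> real (card ((\<lambda>X::'x list. emp_cond X ys) ` {X. length X = length ys}))"
proof -
  define S where "S = {X::'x list. length X = length ys}"
  define V where "V X = emp_cond X ys" for X :: "'x list"
  have finS: "finite S"
    unfolding S_def using finite_lists_length_eq[OF finite_UNIV, of "length ys"] by simp
  have type_mass: "(\<Sum>X\<in>S. \<Prod>i<length ys. V X0 (X ! i) (ys ! i)) = 1" if "X0 \<in> S" for X0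
  proof -
    have "(\<Sum>X\<in>S. \<Prod>i<length ys. V X0 (X ! i) (ys ! i)) = (\<Prod>i<length ys. \<Sum>x\<in>UNIV. V X0 x (ys ! i))"
      unfolding S_def by (rule sum_lists_prod)
    also have "\<dots> = 1"
      using that by (simp add: V_def S_def emp_cond_row_sum)
    finally show ?thesis .
  qed
  have "(\<Sum>X\<in>S. phat X ys) = (\<Sum>v\<in>V ` S. \<Sum>X\<in>{X \<in> S. V X = v}. \<Prod>i<length ys. v (X ! i) (ys ! i))"
    unfolding sum.image_gen[OF finS, of "\<lambda>X. phat X ys" V]
    by (intro sum.cong refl) (auto simp: phat_def V_def S_def)
  also have "\<dots> \<le> (\<Sum>v\<in>V ` S. \<Sum>X\<in>S. \<Prod>i<length ys. v (X ! i) (ys ! i))"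
    by (intro sum_mono sum_mono2[OF finS])
       (auto intro!: prod_nonneg simp: V_def emp_cond_nonneg)
  also have "\<dots> = (\<Sum>v\<in>V ` S. 1)"
    by (intro sum.cong refl) (auto simp: type_mass)
  also have "\<dots> = real (card (V ` S))"
    by simp
  finally show ?thesis by (simp add: S_def V_def)
qed

section \<open>Counting conditional types\<close>

lemma card_image_factor:
  assumes "finite S" and "\<And>a b. a \<in> S \<Longrightarrow> b \<in> S \<Longrightarrow> g a = g b \<Longrightarrow> f a = f b"
  shows "card (f ` S) \<le> card (g ` S)"
proof -
  define h where "h r = f (SOME a. a \<in> S \<and> g a = r)" for r
  have "f a = h (g a)" if "a \<in> S" for a
  proof -
    have "(SOME b. b \<in> S \<and> g b = g a) \<in> S \<and> g (SOME b. b \<in> S \<and> g b = g a) = g a"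
      by (rule someI[of "\<lambda>b. b \<in> S \<and> g b = g a" a]) (simp add: that)
    then show ?thesis unfolding h_def using assms(2) that by metis
  qed
  then have "f ` S = h ` g ` S" by (auto simp: image_iff)
  then show ?thesis using assms(1) by (simp add: card_image_le)
qed

text \<open>The counts in one column are determined by the others, since they add up to the
  number of occurrences of y.\<close>
lemma joint_count_determined:
  fixes X X' :: "'x::finite list" and ys :: "'y::finite list"
  assumes "length X = length ys" "length X' = length ys"
    and "\<And>x. x \<noteq> x0 \<Longrightarrow> joint_count X ys x y = joint_count X' ys x y"
  shows "joint_count X ys x y = joint_count X' ys x y"
proof (cases "x = x0")
  case True
  have "(\<Sum>x\<in>UNIV-{x0}. joint_count X ys x y) = (\<Sum>x\<in>UNIV-{x0}. joint_count X' ys x y)"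
    using assms(3) by (intro sum.cong) auto
  moreover have "(\<Sum>x\<in>UNIV. joint_count X ys x y) = (\<Sum>x\<in>UNIV. joint_count X' ys x y)"
    using sum_joint_count[OF assms(1)] sum_joint_count[OF assms(2)] by simp
  ultimately show ?thesis
    using True by (simp add: sum.remove[of UNIV x0])
qed (use assms(3) in auto)

lemma card_cond_types:
  fixes ys :: "'y::finite list"
  shows "card ((\<lambda>X::'x::finite list. emp_cond X ys) ` {X. length X = length ys})
           \<le> (length ys + 1) ^ ((card (UNIV::'x set) - 1) * card (UNIV::'y set))"
proof -
  define x0 :: 'x where "x0 = undefined"
  define S where "S = {X::'x list. length X = length ys}"
  define A where "A = (UNIV - {x0}) \<times> (UNIV :: 'y set)"
  define counts where "counts X = restrict (\<lambda>(x, y). joint_count X ys x y) A" for X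
  have finS: "finite S"
    unfolding S_def using finite_lists_length_eq[OF finite_UNIV, of "length ys"] by simp
  have finA: "finite A" by (simp add: A_def)
  have determined: "emp_cond X ys = emp_cond X' ys"
    if "X \<in> S" "X' \<in> S" "counts X = counts X'" for X X'
  proof -
    have "joint_count X ys x y = joint_count X' ys x y" for x y
    proof (rule joint_count_determined[of X ys X' x0])
      fix x assume "x \<noteq> x0"
      then show "joint_count X ys x y = joint_count X' ys x y"
        using fun_cong[OF that(3), of "(x, y)"] by (simp add: counts_def A_def)
    qed (use that in \<open>auto simp: S_def\<close>)
    then show ?thesis
      using that by (auto simp: S_def emp_cond_def emp_joint_count fun_eq_iff)
  qed
  have range: "counts ` S \<subseteq> PiE A (\<lambda>_. {0..length ys})"
    by (auto simp: counts_def S_def intro!: le_trans[OF joint_count_le])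
  have "card ((\<lambda>X. emp_cond X ys) ` S) \<le> card (counts ` S)"
    using card_image_factor[OF finS determined] by simp
  also have "\<dots> \<le> card (PiE A (\<lambda>_. {0..length ys}))"
    by (rule card_mono[OF _ range]) (simp add: finite_PiE finA)
  also have "\<dots> = (length ys + 1) ^ ((card (UNIV::'x set) - 1) * card (UNIV::'y set))"
    using finA by (simp add: card_PiE A_def card_cartesian_product card_Diff_singleton)
  finally show ?thesis by (simp add: S_def)
qed

section \<open>The tail bound\<close>

lemma mass_above_ratio_threshold:
  fixes p q :: "'a \<Rightarrow> real"
  assumes "finite S" and q_pos: "\<And>X. X \<in> S \<Longrightarrow> q X > 0"
    and "\<And>X. X \<in> S \<Longrightarrow> p X \<ge> 0" and "t > 0"
  shows "(\<Sum>X\<in>{X \<in> S. t \<le> p X / q X}. q X) \<le> (\<Sum>X\<in>S. p X) / t"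
proof -
  have "(\<Sum>X\<in>{X \<in> S. t \<le> p X / q X}. q X) \<le> (\<Sum>X\<in>{X \<in> S. t \<le> p X / q X}. p X / t)"
  proof (rule sum_mono)
    fix X assume "X \<in> {X \<in> S. t \<le> p X / q X}"
    then have "t * q X \<le> p X"
      using q_pos[of X] by (simp add: pos_le_divide_eq)
    then show "q X \<le> p X / t"
      using \<open>t > 0\<close> by (simp add: pos_le_divide_eq mult.commute)
  qed
  also have "\<dots> \<le> (\<Sum>X\<in>S. p X / t)"
    using assms by (intro sum_mono2) auto
  finally show ?thesis by (simp add: sum_divide_distrib)
qed

lemma power_Suc_le_powr:
  assumes "m \<ge> 1"
  shows "real ((m + 1) ^ k) \<le> 2 powr (real k * log 2 (real m) + real k)"
proof -
  have "real ((m + 1) ^ k) = (real m + 1) ^ k" by (simp add: add.commute)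
  also have "\<dots> \<le> (2 * real m) ^ k"
    using assms by (intro power_mono) auto
  also have "\<dots> = 2 powr (real k * log 2 (real m) + real k)"
  proof -
    have "2 powr (real k * log 2 (real m)) = real m ^ k"
      using assms by (simp add: powr_powr[symmetric] powr_realpow mult.commute[of "real k"])
    then show ?thesis
      by (simp add: powr_add powr_realpow power_mult_distrib)
  qed
  finally show ?thesis .
qed
lemma iid_prob_likelihood_ratio_tail:
  fixes Q :: "'x::finite \<Rightarrow> real" and ys :: "'y::finite list"
  assumes "m \<ge> 1" and Qpos: "\<And>x. Q x > 0" and len: "length ys = m"
  defines "k \<equiv> (card (UNIV::'x set) - 1) * card (UNIV::'y set)"
  shows "iid_prob Q m (\<lambda>X. phat X ys / Qprod Q X \<ge> 2 powr (real m * T))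
           \<le> 2 powr (- (real m * T - real k * log 2 (real m) - real k))"
proof -
  define S where "S = {X::'x list. length X = m}"
  have finS: "finite S"
    unfolding S_def using finite_lists_length_eq[OF finite_UNIV, of m] by simp
  have Qprod_pos: "Qprod Q X > 0" for X
    unfolding Qprod_def by (rule prod_pos) (simp add: Qpos)
  have phat_nonneg: "phat X ys \<ge> 0" for X :: "'x list"
    unfolding phat_def by (rule prod_nonneg) (simp add: emp_cond_nonneg)
  have "iid_prob Q m (\<lambda>X. phat X ys / Qprod Q X \<ge> 2 powr (real m * T))
      = (\<Sum>X\<in>{X \<in> S. 2 powr (real m * T) \<le> phat X ys / Qprod Q X}. Qprod Q X)"
    unfolding iid_prob_def S_def by (rule sum.cong) auto
  also have "\<dots> \<le> (\<Sum>X\<in>S. phat X ys) / 2 powr (real m * T)"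
    by (rule mass_above_ratio_threshold[OF finS Qprod_pos phat_nonneg]) simp
  also have "\<dots> \<le> real ((m + 1) ^ k) / 2 powr (real m * T)"
  proof (rule divide_right_mono)
    have "(\<Sum>X\<in>S. phat X ys) \<le> real (card ((\<lambda>X::'x list. emp_cond X ys) ` S))"
      using sum_phat_le_card_types[of ys, where 'x='x] by (simp add: S_def len)
    also have "\<dots> \<le> real ((m + 1) ^ k)"
      using card_cond_types[of ys, where 'x='x] unfolding S_def k_def len of_nat_le_iff .
    finally show "(\<Sum>X\<in>S. phat X ys) \<le> real ((m + 1) ^ k)" .
  qed simp
  also have "\<dots> \<le> 2 powr (real k * log 2 (real m) + real k) / 2 powr (real m * T)"
    by (rule divide_right_mono[OF power_Suc_le_powr[OF assms(1)]]) simp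
  also have "\<dots> = 2 powr ((real k * log 2 (real m) + real k) - real m * T)"
    by (rule powr_diff[symmetric])
  also have "\<dots> = 2 powr (- (real m * T - real k * log 2 (real m) - real k))"
    by (simp add: algebra_simps)
  finally show ?thesis .
qed

theorem lemma7:
  fixes Q :: "'x::finite \<Rightarrow> real" and xs :: "'x list" and ys :: "'y::finite list" and m :: nat
  assumes "m \<ge> 1"
    and "\<And>x. Q x > 0" and "(\<Sum>x\<in>UNIV. Q x) = 1"
    and "length xs = m" and "length ys = m"
  shows "false_MI Q (\<lambda>y x. emp_joint xs ys x y / Q x)
           = (1 / real m) * log 2 (phat xs ys / Qprod Q xs)
     \<and> (\<forall>(T::real) (ys'::'y list). length ys' = m \<longrightarrow>
           iid_prob Q m (\<lambda>X. phat X ys' / Qprod Q X \<ge> 2 powr (real m * T))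
             \<le> 2 powr (- (real m * T
                  - real ((card (UNIV::'x set) - 1) * card (UNIV::'y set)) * log 2 (real m)
                  - real ((card (UNIV::'x set) - 1) * card (UNIV::'y set)))))"
proof (intro conjI allI impI)
  show "false_MI Q (\<lambda>y x. emp_joint xs ys x y / Q x) = (1 / real m) * log 2 (phat xs ys / Qprod Q xs)"
    by (rule false_MI_empirical_channel[OF assms(2,4,5)])
next
  fix T :: real and ys' :: "'y list"
  assume "length ys' = m"
  then show "iid_prob Q m (\<lambda>X. phat X ys' / Qprod Q X \<ge> 2 powr (real m * T))
             \<le> 2 powr (- (real m * T
                  - real ((card (UNIV::'x set) - 1) * card (UNIV::'y set)) * log 2 (real m)
                  - real ((card (UNIV::'x set) - 1) * card (UNIV::'y set))))"
    by (rule iid_prob_likelihood_ratio_tail[OF assms(1,2)])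
qed

end
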